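(* Let $S=\mathbb{K}[x_1,\dots,x_n]$ and let $I\subseteq S$ be a monomial ideal which contains no variable, and let $s\geq 1$ be an integer. Assume that $I^s$ has linear quotients with respect to (the restriction to $G(I^s)$ of) a monomial order $<$ on $S$. Then there exists a linear order $\prec$ on $G(I)$ such that for any two monomials $u\prec v$ in $G(I)$ with $\gcd(u,v)=1$ there exists a monomial $w\in G(I)$ with $w\neq u,v$, $u\prec w$, and $\operatorname{supp}(w)\subseteq\operatorname{supp}(u)\cup\operatorname{supp}(v)$.
   Context: $G(I)$ denotes the set of minimal monomial generators of a monomial ideal $I$; $\operatorname{supp}(u)$ is the set of variables dividing a monomial $u$. A monomial order is a total order on monomials of $S$ which is multiplicative ($u<v\Rightarrow uw<vw$) and has $1$ as its least element. If $u_1\prec u_2\prec\dots\prec u_t$ is a linear order on $G(I)$, then $I$ has linear quotients with respect to this order if for every $2\leq i\leq t$ the colon ideal $(u_1,\dots,u_{i-1}):u_i$ is generated by a subset of the variables. *)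

theory Defs
  imports Main
begin

text \<open>Monomials of S = K[x_1,...,x_n] are represented by exponent vectors
  a :: nat => nat with a i = 0 for i >= n (variable x_(i+1) has index i).
  A monomial ideal is determined by the set of monomials it contains; this set is
  closed under multiplication by arbitrary monomials.  The field K plays no role.\<close>

definition monoms :: "nat \<Rightarrow> (nat \<Rightarrow> nat) set" where
  "monoms n = {a. \<forall>i\<ge>n. a i = 0}"

definition mmult :: "(nat \<Rightarrow> nat) \<Rightarrow> (nat \<Rightarrow> nat) \<Rightarrow> (nat \<Rightarrow> nat)" where
  "mmult a b = (\<lambda>i. a i + b i)"

definition mdvd :: "(nat \<Rightarrow> nat) \<Rightarrow> (nat \<Rightarrow> nat) \<Rightarrow> bool" where
  "mdvd a b \<longleftrightarrow> (\<forall>i. a i \<le> b i)"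

definition var :: "nat \<Rightarrow> (nat \<Rightarrow> nat)" where
  "var i = (\<lambda>j. if j = i then 1 else 0)"

definition supp :: "(nat \<Rightarrow> nat) \<Rightarrow> nat set" where
  "supp a = {i. a i \<noteq> 0}"

definition monomial_ideal :: "nat \<Rightarrow> (nat \<Rightarrow> nat) set \<Rightarrow> bool" where
  "monomial_ideal n I \<longleftrightarrow> I \<subseteq> monoms n \<and>
     (\<forall>u\<in>I. \<forall>m\<in>monoms n. mmult u m \<in> I)"

definition gens :: "(nat \<Rightarrow> nat) set \<Rightarrow> (nat \<Rightarrow> nat) set" where
  "gens I = {u\<in>I. \<forall>v\<in>I. mdvd v u \<longrightarrow> v = u}"

definition ideal_pow :: "nat \<Rightarrow> (nat \<Rightarrow> nat) set \<Rightarrow> nat \<Rightarrow> (nat \<Rightarrow> nat) set" where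
  "ideal_pow n I s = {m\<in>monoms n. \<exists>us. length us = s \<and> set us \<subseteq> I \<and>
      mdvd (foldr mmult us (\<lambda>_. 0)) m}"

definition monomial_order :: "nat \<Rightarrow> ((nat \<Rightarrow> nat) \<Rightarrow> (nat \<Rightarrow> nat) \<Rightarrow> bool) \<Rightarrow> bool" where
  "monomial_order n lt \<longleftrightarrow>
     (\<forall>a\<in>monoms n. \<not> lt a a) \<and>
     (\<forall>a\<in>monoms n. \<forall>b\<in>monoms n. \<forall>c\<in>monoms n. lt a b \<longrightarrow> lt b c \<longrightarrow> lt a c) \<and>
     (\<forall>a\<in>monoms n. \<forall>b\<in>monoms n. a = b \<or> lt a b \<or> lt b a) \<and>
     (\<forall>a\<in>monoms n. \<forall>b\<in>monoms n. \<forall>c\<in>monoms n. lt a b \<longrightarrow> lt (mmult a c) (mmult b c)) \<and>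
     (\<forall>a\<in>monoms n. a \<noteq> (\<lambda>_. 0) \<longrightarrow> lt (\<lambda>_. 0) a)"

definition strict_linear_order_on :: "'a set \<Rightarrow> ('a \<Rightarrow> 'a \<Rightarrow> bool) \<Rightarrow> bool" where
  "strict_linear_order_on A r \<longleftrightarrow>
     (\<forall>a\<in>A. \<not> r a a) \<and>
     (\<forall>a\<in>A. \<forall>b\<in>A. \<forall>c\<in>A. r a b \<longrightarrow> r b c \<longrightarrow> r a c) \<and>
     (\<forall>a\<in>A. \<forall>b\<in>A. a = b \<or> r a b \<or> r b a)"

text \<open>I has linear quotients w.r.t. the order prec on G(I): for every u in G(I), the colon
  ideal (v : v in G(I), v prec u) : u, whose monomials are those m with some such v
  dividing m*u, is generated by a subset V of the variables.  (For the first generator the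
  colon ideal is 0, generated by the empty set of variables, so the condition is vacuous.)\<close>
definition linear_quotients :: "nat \<Rightarrow> (nat \<Rightarrow> nat) set \<Rightarrow> ((nat \<Rightarrow> nat) \<Rightarrow> (nat \<Rightarrow> nat) \<Rightarrow> bool) \<Rightarrow> bool" where
  "linear_quotients n I prec \<longleftrightarrow>
     (\<forall>u\<in>gens I. \<exists>V\<subseteq>{..<n}.
        {m\<in>monoms n. \<exists>v\<in>gens I. prec v u \<and> mdvd v (mmult m u)}
        = {m\<in>monoms n. \<exists>i\<in>V. mdvd (var i) m})"

end

theory Submission
  imports Defs
begin

text \<open>Let \<open>u, v \<in> G(I)\<close> have disjoint supports, let \<open>v < u\<close> in the monomial order and
  put \<open>U = u\<^sup>s\<close>. We find a monomial \<open>c\<close>, equal to \<open>1\<close> or to a variable dividing \<open>v\<close>, and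
  some \<open>a \<in> I\<^sup>s\<close> with \<open>a < U\<close> and \<open>a | cU\<close>. If \<open>U \<notin> G(I\<^sup>s)\<close> take \<open>c = 1\<close> and \<open>a\<close> a
  proper divisor of \<open>U\<close> in \<open>I\<^sup>s\<close>. Otherwise \<open>vu\<^sup>s\<^sup>-\<^sup>1 < U\<close> shows that \<open>v\<close> lies in the colon
  ideal of \<open>U\<close>, which by linear quotients is generated by variables; so some variable
  \<open>x\<^sub>i | v\<close> lies in it too, and \<open>c = x\<^sub>i\<close> works. Since \<open>a\<close> is divisible by a product of \<open>s\<close>
  elements of \<open>I\<close> which is smaller than \<open>u\<^sup>s\<close>, one factor is smaller than \<open>u\<close>; a minimal
  generator \<open>w\<close> below it satisfies \<open>w < u\<close> and \<open>w | cu\<^sup>s\<close>, whence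
  \<open>supp w \<subseteq> supp u \<union> supp v\<close>. Finally \<open>w = v\<close> would force \<open>v | c\<close>, i.e. \<open>v = 1\<close>
  (impossible, as \<open>v\<close> does not divide \<open>u\<close>) or \<open>v = x\<^sub>i \<in> I\<close>. Hence the reverse of the monomial order
  on \<open>G(I)\<close> has the required property.\<close>

abbreviation munit :: "nat \<Rightarrow> nat" where
  "munit \<equiv> \<lambda>_. 0"

abbreviation mprod :: "(nat \<Rightarrow> nat) list \<Rightarrow> nat \<Rightarrow> nat" where
  "mprod ws \<equiv> foldr mmult ws munit"

text \<open>The simplifier rewrites \<open>mpow u s\<close> to \<open>(mmult u ^^ s) munit\<close> (by \<open>foldr_replicate\<close>),
  so \<open>mpow_apply\<close> below is used by unfolding rather than as a simp rule.\<close>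
abbreviation mpow :: "(nat \<Rightarrow> nat) \<Rightarrow> nat \<Rightarrow> nat \<Rightarrow> nat" where
  "mpow u s \<equiv> mprod (replicate s u)"

definition colon_gens ::
    "nat \<Rightarrow> (nat \<Rightarrow> nat) set \<Rightarrow> ((nat \<Rightarrow> nat) \<Rightarrow> (nat \<Rightarrow> nat) \<Rightarrow> bool) \<Rightarrow> (nat \<Rightarrow> nat) \<Rightarrow> (nat \<Rightarrow> nat) set"
  where "colon_gens n J prec u = {m\<in>monoms n. \<exists>v\<in>gens J. prec v u \<and> mdvd v (mmult m u)}"

lemma mmult_commute: "mmult a b = mmult b a"
  by (auto simp: mmult_def)

lemma mmult_munit [simp]: "mmult munit a = a"
  by (simp add: mmult_def)

lemma mmult_in_monoms: "a \<in> monoms n \<Longrightarrow> b \<in> monoms n \<Longrightarrow> mmult a b \<in> monoms n"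
  by (auto simp: monoms_def mmult_def)

lemma mprod_in_monoms: "set ws \<subseteq> monoms n \<Longrightarrow> mprod ws \<in> monoms n"
  by (induction ws) (auto simp: monoms_def mmult_def)

lemma mpow_in_monoms: "u \<in> monoms n \<Longrightarrow> mpow u s \<in> monoms n"
  by (rule mprod_in_monoms) auto

lemma mprod_apply: "mprod ws i = (\<Sum>w\<leftarrow>ws. w i)"
  by (induction ws) (auto simp: mmult_def)

lemma mpow_apply: "mpow u s i = s * u i"
  by (induction s) (auto simp: mmult_def)

lemma mdvd_refl: "mdvd a a"
  by (simp add: mdvd_def)

lemma mdvd_trans: "mdvd a b \<Longrightarrow> mdvd b c \<Longrightarrow> mdvd a c"
  unfolding mdvd_def by (meson le_trans)

lemma mdvd_antisym: "mdvd a b \<Longrightarrow> mdvd b a \<Longrightarrow> a = b"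
  unfolding mdvd_def by (intro ext) (meson le_antisym)

lemma mdvd_mmult_mono: "mdvd a b \<Longrightarrow> mdvd (mmult c a) (mmult c b)"
  by (simp add: mdvd_def mmult_def)

lemma mdvd_mprod: "w \<in> set ws \<Longrightarrow> mdvd w (mprod ws)"
  unfolding mdvd_def mprod_apply
  by (intro allI member_le_sum_list) auto

lemma munit_mdvd: "mdvd munit a"
  by (simp add: mdvd_def)

lemma supp_mono: "mdvd a b \<Longrightarrow> supp a \<subseteq> supp b"
  unfolding supp_def mdvd_def by (metis (mono_tags) Collect_mono le_zero_eq)

lemma supp_mdvd_mmult_mpow:
  assumes "mdvd w (mmult c (mpow u s))"
  shows "supp w \<subseteq> supp c \<union> supp u"
  using supp_mono[OF assms] unfolding supp_def mmult_def mpow_apply by auto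

lemma mdvd_mmult_mpow_coprime:
  assumes "supp v \<inter> supp u = {}" and "mdvd v (mmult c (mpow u s))"
  shows "mdvd v c"
  unfolding mdvd_def
proof
  fix i
  show "v i \<le> c i"
  proof (cases "v i = 0")
    case False
    then have "u i = 0" using assms(1) by (auto simp: supp_def)
    then show ?thesis using assms(2)[unfolded mdvd_def mmult_def mpow_apply, THEN spec, of i] by simp
  qed simp
qed

lemma ex_gens_mdvd:
  assumes J: "J \<subseteq> monoms n" and a: "a \<in> J"
  shows "\<exists>g\<in>gens J. mdvd g a"
proof -
  let ?deg = "\<lambda>b. \<Sum>i<n. b i"
  obtain g where g: "g \<in> J" "mdvd g a"
    and least: "\<And>b. b \<in> J \<Longrightarrow> mdvd b a \<Longrightarrow> ?deg g \<le> ?deg b"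
    using ex_has_least_nat[of "\<lambda>b. b \<in> J \<and> mdvd b a" a ?deg] a mdvd_refl by blast
  have "g \<in> gens J"
    unfolding gens_def
  proof (intro CollectI conjI ballI impI)
    fix b assume b: "b \<in> J" "mdvd b g"
    have not_less: "\<not> b i < g i" if "i < n" for i
    proof
      assume "b i < g i"
      then have "?deg b < ?deg g"
        using b(2) that unfolding mdvd_def by (intro sum_strict_mono_ex1) auto
      then show False using least[OF b(1) mdvd_trans[OF b(2) g(2)]] by simp
    qed
    have "b i = g i" for i
    proof (cases "i < n")
      case True
      then show ?thesis using not_less[OF True] b(2) unfolding mdvd_def by (meson le_less)
    next
      case False
      moreover have "b \<in> monoms n" "g \<in> monoms n" using b(1) g(1) J by auto
      ultimately show ?thesis by (simp add: monoms_def)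
    qed
    then show "b = g" by blast
  qed (use g in simp)
  then show ?thesis using g by blast
qed

lemma mprod_in_ideal_pow:
  assumes "I \<subseteq> monoms n" and "set ws \<subseteq> I"
  shows "mprod ws \<in> ideal_pow n I (length ws)"
  using assms mprod_in_monoms[of ws n] mdvd_refl by (auto simp: ideal_pow_def)

lemma colon_gens_ex_var:
  assumes "linear_quotients n J prec" and "u \<in> gens J" and "m \<in> colon_gens n J prec u"
  shows "\<exists>i<n. mdvd (var i) m \<and> var i \<in> colon_gens n J prec u"
proof -
  have "\<exists>V\<subseteq>{..<n}. colon_gens n J prec u = {m\<in>monoms n. \<exists>i\<in>V. mdvd (var i) m}"
    using bspec[OF assms(1)[unfolded linear_quotients_def] assms(2)] unfolding colon_gens_def .
  then obtain V where V: "V \<subseteq> {..<n}"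
    and colon: "colon_gens n J prec u = {m\<in>monoms n. \<exists>i\<in>V. mdvd (var i) m}"
    by blast
  obtain i where i: "i \<in> V" "mdvd (var i) m" using assms(3) unfolding colon by blast
  have "var i \<in> monoms n" using i(1) V by (auto simp: monoms_def var_def)
  then have "var i \<in> colon_gens n J prec u" unfolding colon using i(1) mdvd_refl by blast
  then show ?thesis using i V by blast
qed

locale monorder =
  fixes n :: nat and lt :: "(nat \<Rightarrow> nat) \<Rightarrow> (nat \<Rightarrow> nat) \<Rightarrow> bool"
  assumes monomial_order: "monomial_order n lt"
begin

abbreviation leq :: "(nat \<Rightarrow> nat) \<Rightarrow> (nat \<Rightarrow> nat) \<Rightarrow> bool" where
  "leq a b \<equiv> a = b \<or> lt a b"

lemma lt_irrefl: "a \<in> monoms n \<Longrightarrow> \<not> lt a a"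
  using monomial_order by (simp add: monomial_order_def)

lemma lt_trans: "a \<in> monoms n \<Longrightarrow> b \<in> monoms n \<Longrightarrow> c \<in> monoms n \<Longrightarrow> lt a b \<Longrightarrow> lt b c \<Longrightarrow> lt a c"
  using monomial_order unfolding monomial_order_def by blast

lemma leq_lt_trans:
  "a \<in> monoms n \<Longrightarrow> b \<in> monoms n \<Longrightarrow> c \<in> monoms n \<Longrightarrow> leq a b \<Longrightarrow> lt b c \<Longrightarrow> lt a c"
  using lt_trans by blast

lemma lt_total: "a \<in> monoms n \<Longrightarrow> b \<in> monoms n \<Longrightarrow> a = b \<or> lt a b \<or> lt b a"
  using monomial_order unfolding monomial_order_def by blast

lemma lt_mmult: "a \<in> monoms n \<Longrightarrow> b \<in> monoms n \<Longrightarrow> c \<in> monoms n \<Longrightarrow> lt a b \<Longrightarrow> lt (mmult a c) (mmult b c)"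
  using monomial_order unfolding monomial_order_def by blast

lemma munit_lt: "a \<in> monoms n \<Longrightarrow> a \<noteq> munit \<Longrightarrow> lt munit a"
  using monomial_order unfolding monomial_order_def by blast

lemma strict_linear_order_on_converse:
  "A \<subseteq> monoms n \<Longrightarrow> strict_linear_order_on A (\<lambda>a b. lt b a)"
  unfolding strict_linear_order_on_def using lt_irrefl lt_trans lt_total by blast

lemma leq_mmult:
  assumes "a \<in> monoms n" "b \<in> monoms n" "c \<in> monoms n" "leq a b"
  shows "leq (mmult a c) (mmult b c)"
  using assms lt_mmult by blast

lemma mdvd_imp_leq:
  assumes a: "a \<in> monoms n" and b: "b \<in> monoms n" and "mdvd a b"
  shows "leq a b"
proof -
  define c where "c = (\<lambda>i. b i - a i)"
  have c: "c \<in> monoms n" using b by (auto simp: monoms_def c_def)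
  have "b = mmult c a" using \<open>mdvd a b\<close> by (auto simp: mdvd_def mmult_def c_def)
  moreover have "leq munit c" using munit_lt[OF c] by blast
  ultimately show ?thesis
    using leq_mmult[OF _ c a] by (force simp: monoms_def)
qed

lemma mpow_leq_mprod:
  assumes u: "u \<in> monoms n" and ws: "set ws \<subseteq> monoms n" and ge: "\<forall>w\<in>set ws. leq u w"
  shows "leq (mpow u (length ws)) (mprod ws)"
  using ws ge
proof (induction ws)
  case (Cons w ws)
  have R: "mpow u (length ws) \<in> monoms n" using mpow_in_monoms[OF u] .
  have Q: "mprod ws \<in> monoms n" using Cons.prems mprod_in_monoms by auto
  have w: "w \<in> monoms n" using Cons.prems by auto
  have "leq (mmult (mpow u (length ws)) u) (mmult (mprod ws) u)"
    using leq_mmult[OF R Q u] Cons by auto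
  moreover have "leq (mmult u (mprod ws)) (mmult w (mprod ws))"
    using leq_mmult[OF u w Q] Cons.prems by auto
  ultimately show ?case
    using lt_trans[OF mmult_in_monoms[OF u R] mmult_in_monoms[OF u Q] mmult_in_monoms[OF w Q]]
    by (auto simp: mmult_commute)
qed simp

lemma ex_lt_of_mprod_lt_mpow:
  assumes u: "u \<in> monoms n" and ws: "set ws \<subseteq> monoms n"
    and less: "lt (mprod ws) (mpow u (length ws))"
  shows "\<exists>w\<in>set ws. lt w u"
proof (rule ccontr)
  assume "\<not> ?thesis"
  then have "\<forall>w\<in>set ws. leq u w" using lt_total u ws by blast
  then have "leq (mpow u (length ws)) (mprod ws)" using mpow_leq_mprod[OF u ws] by blast
  then show False
    using less lt_irrefl lt_trans mprod_in_monoms[OF ws] mpow_in_monoms[OF u] by metis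
qed

lemma ex_gens_lt_mdvd:
  assumes I: "I \<subseteq> monoms n" and a: "a \<in> ideal_pow n I s" and u: "u \<in> monoms n"
    and less: "lt a (mpow u s)"
  shows "\<exists>w\<in>gens I. lt w u \<and> mdvd w a"
proof -
  obtain ws where ws: "length ws = s" "set ws \<subseteq> I" "mdvd (mprod ws) a"
    using a by (auto simp: ideal_pow_def)
  have am: "a \<in> monoms n" using a by (simp add: ideal_pow_def)
  have wsm: "set ws \<subseteq> monoms n" using ws(2) I by blast
  have "lt (mprod ws) (mpow u (length ws))"
    using leq_lt_trans[OF mprod_in_monoms[OF wsm] am mpow_in_monoms[OF u]]
      mdvd_imp_leq[OF mprod_in_monoms[OF wsm] am ws(3)] less ws(1) by blast
  then obtain w where w: "w \<in> set ws" "lt w u"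
    using ex_lt_of_mprod_lt_mpow[OF u wsm] by blast
  obtain g where g: "g \<in> gens I" "mdvd g w"
    using ex_gens_mdvd[OF I] w(1) ws(2) by blast
  have gm: "g \<in> monoms n" using g(1) I by (auto simp: gens_def)
  have wm: "w \<in> monoms n" using w(1) wsm by blast
  have "lt g u" using leq_lt_trans[OF gm wm u mdvd_imp_leq[OF gm wm g(2)] w(2)] .
  moreover have "mdvd g a" using mdvd_trans[OF g(2) mdvd_trans[OF mdvd_mprod[OF w(1)] ws(3)]] .
  ultimately show ?thesis using g(1) by blast
qed

lemma ex_ideal_pow_lt_mpow:
  assumes I: "I \<subseteq> monoms n" and lq: "linear_quotients n (ideal_pow n I s) lt" and "s \<ge> 1"
    and u: "u \<in> I" and v: "v \<in> I" and vu: "lt v u"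
  shows "\<exists>c a. (c = munit \<or> (\<exists>i<n. c = var i)) \<and> mdvd c v \<and>
    a \<in> ideal_pow n I s \<and> lt a (mpow u s) \<and> mdvd a (mmult c (mpow u s))"
proof -
  define J where "J = ideal_pow n I s"
  define U where "U = mpow u s"
  have Jm: "J \<subseteq> monoms n" by (auto simp: J_def ideal_pow_def)
  have um: "u \<in> monoms n" and vm: "v \<in> monoms n" using u v I by auto
  have Um: "U \<in> monoms n" unfolding U_def using mpow_in_monoms[OF um] .
  show ?thesis
  proof (cases "U \<in> gens J")
    case False
    have "set (replicate s u) \<subseteq> I" using u by auto
    from mprod_in_ideal_pow[OF I this] have "U \<in> J" unfolding U_def J_def by simp
    then obtain a where a: "a \<in> J" "mdvd a U" "a \<noteq> U"
      using False by (auto simp: gens_def)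
    have "lt a U" using mdvd_imp_leq[OF _ Um a(2)] a Jm by blast
    then show ?thesis
      using a(1,2) munit_mdvd[of v] unfolding J_def U_def by (intro exI[of _ munit] exI[of _ a]) simp
  next
    case True
    obtain k where sk: "s = Suc k" using \<open>s \<ge> 1\<close> by (cases s) auto
    define R where "R = mpow u k"
    have Rm: "R \<in> monoms n" unfolding R_def using mpow_in_monoms[OF um] .
    have UR: "U = mmult u R" unfolding U_def R_def sk by simp
    have "set (v # replicate k u) \<subseteq> I" using u v by auto
    from mprod_in_ideal_pow[OF I this] have "mmult v R \<in> J" unfolding J_def R_def sk by simp
    then obtain h where h: "h \<in> gens J" "mdvd h (mmult v R)" using ex_gens_mdvd[OF Jm] by blast
    have hm: "h \<in> monoms n" using h(1) Jm by (auto simp: gens_def)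
    have "lt (mmult v R) U" using lt_mmult[OF vm um Rm vu] UR by simp
    then have hU: "lt h U"
      using leq_lt_trans[OF hm mmult_in_monoms[OF vm Rm] Um mdvd_imp_leq[OF hm _ h(2)]]
        mmult_in_monoms[OF vm Rm] by blast
    have "mdvd R U" unfolding UR by (simp add: mdvd_def mmult_def)
    then have "mdvd h (mmult v U)" using mdvd_trans[OF h(2) mdvd_mmult_mono] by blast
    then have "v \<in> colon_gens n J lt U" using vm h(1) hU by (auto simp: colon_gens_def)
    then obtain i where i: "i < n" "mdvd (var i) v" "var i \<in> colon_gens n J lt U"
      using colon_gens_ex_var[OF lq[folded J_def] True] by blast
    then obtain a where "a \<in> gens J" "lt a U" "mdvd a (mmult (var i) U)"
      by (auto simp: colon_gens_def)
    then show ?thesis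
      using i(1,2) unfolding J_def U_def gens_def by (intro exI[of _ "var i"] exI[of _ a]) blast
  qed
qed

lemma ex_gens_lt_supp_subset:
  assumes I: "I \<subseteq> monoms n" and no_var: "\<forall>i<n. var i \<notin> I" and "s \<ge> 1"
    and lq: "linear_quotients n (ideal_pow n I s) lt"
    and u: "u \<in> gens I" and v: "v \<in> gens I" and vu: "lt v u"
    and disj: "supp u \<inter> supp v = {}"
  shows "\<exists>w\<in>gens I. w \<noteq> u \<and> w \<noteq> v \<and> lt w u \<and> supp w \<subseteq> supp u \<union> supp v"
proof -
  have uI: "u \<in> I" and vI: "v \<in> I" using u v by (auto simp: gens_def)
  have um: "u \<in> monoms n" using uI I by blast
  obtain c a where c: "c = munit \<or> (\<exists>i<n. c = var i)" "mdvd c v"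
    and a: "a \<in> ideal_pow n I s" "lt a (mpow u s)" "mdvd a (mmult c (mpow u s))"
    using ex_ideal_pow_lt_mpow[OF I lq \<open>s \<ge> 1\<close> uI vI vu] by blast
  obtain w where w: "w \<in> gens I" "lt w u" "mdvd w a"
    using ex_gens_lt_mdvd[OF I a(1) um a(2)] by blast
  have wc: "mdvd w (mmult c (mpow u s))" using mdvd_trans[OF w(3) a(3)] .
  have "supp w \<subseteq> supp u \<union> supp v"
    using supp_mdvd_mmult_mpow[OF wc] supp_mono[OF c(2)] by blast
  moreover have "w \<noteq> u" using w(2) lt_irrefl[OF um] by blast
  moreover have "w \<noteq> v"
  proof
    assume "w = v"
    then have "mdvd v c" using mdvd_mmult_mpow_coprime[of v u c s] wc disj by blast
    then have "v = c" using mdvd_antisym c(2) by blast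
    moreover have "v \<noteq> munit"
    proof
      assume "v = munit"
      then have "v = u" using u vI munit_mdvd by (auto simp: gens_def)
      then show False using vu lt_irrefl[OF um] by blast
    qed
    ultimately show False using c(1) vI no_var by blast
  qed
  ultimately show ?thesis using w(1,2) by blast
qed

end

theorem proposition2p7:
  fixes n s :: nat and I :: "(nat \<Rightarrow> nat) set"
    and lt :: "(nat \<Rightarrow> nat) \<Rightarrow> (nat \<Rightarrow> nat) \<Rightarrow> bool"
  assumes "monomial_ideal n I"
    and "\<forall>i<n. var i \<notin> I"
    and "s \<ge> 1"
    and "monomial_order n lt"
    and "linear_quotients n (ideal_pow n I s) lt"
  shows "\<exists>prec. strict_linear_order_on (gens I) prec \<and>
    (\<forall>u\<in>gens I. \<forall>v\<in>gens I. prec u v \<and> supp u \<inter> supp v = {} \<longrightarrow>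
       (\<exists>w\<in>gens I. w \<noteq> u \<and> w \<noteq> v \<and> prec u w \<and> supp w \<subseteq> supp u \<union> supp v))"
proof -
  interpret monorder n lt by (rule monorder.intro) (rule assms(4))
  have I: "I \<subseteq> monoms n" using assms(1) by (simp add: monomial_ideal_def)
  then have "strict_linear_order_on (gens I) (\<lambda>a b. lt b a)"
    by (intro strict_linear_order_on_converse) (auto simp: gens_def)
  with ex_gens_lt_supp_subset[OF I assms(2,3,5)] show ?thesis
    by (intro exI[of _ "\<lambda>a b. lt b a"]) blast
qed

end
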